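(* Let $t\ge2$, $k\ge 2$, and let $C$ be a binary linear $t$-CIS $[tk,k]$ code. Then $C$ is equivalent (by a permutation of coordinates) to a $t$-CIS $[tk,k]$ code $C_1$ which is obtained from some $t$-CIS $[t(k-1),k-1]$ code by the building up construction; that is, there exist invertible $(k-1)\times(k-1)$ matrices $A_1,\dots,A_t$ over $\mathbb{F}_2$ such that $(A_1\ \cdots\ A_t)$ generates a $t$-CIS $[t(k-1),k-1]$ code, and choices of $\mathbf x_j\in\mathbb{F}_2^{k-1}$, $y_{ij}\in\mathbb{F}_2$, such that $C_1$ is generated by the matrix $G_1$ of the building up construction.
   Context: Building up construction: given invertible $m\times m$ matrices $A_1,\dots,A_t$ over $\mathbb{F}_2$ with rows $A_j(\mathbf r_1),\dots,A_j(\mathbf r_m)$, vectors $\mathbf x_j\in\mathbb{F}_2^m$ and bits $y_{ij}$ ($1\le i\le m$, $1\le j\le t$), let $c_{ij}\in\mathbb{F}_2$ be the unique elements with $\mathbf x_j=\sum_i c_{ij}A_j(\mathbf r_i)$ and $z_j=1+\sum_i c_{ij}y_{ij}$; $G_1$ is the $(m+1)\times t(m+1)$ matrix whose first row is $(z_1,\mathbf x_1,z_2,\mathbf x_2,\dots,z_t,\mathbf x_t)$ and whose $(i+1)$-th row is $(y_{i1},A_1(\mathbf r_i),y_{i2},A_2(\mathbf r_i),\dots,y_{it},A_t(\mathbf r_i))$. A binary linear $[tk,k]$ code is $t$-CIS if its coordinate set can be partitioned into $t$ pairwise disjoint information sets, an information set being a set of $k$ coordinates whose columns in a generator matrix are linearly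 independent. *)

theory Defs
  imports Main "HOL-Library.Z2" "HOL-Combinatorics.Permutations"
begin

(* Matrices over F_2 are functions  nat => nat => bit  (row, column), 0-based;
   only entries with indices in range matter. Vectors are  nat => bit. *)

definition rowspace :: "nat \<Rightarrow> nat \<Rightarrow> (nat \<Rightarrow> nat \<Rightarrow> bit) \<Rightarrow> (nat \<Rightarrow> bit) set" where
  "rowspace k n G = {v. \<exists>a::nat \<Rightarrow> bit. \<forall>c. v c = (if c < n then (\<Sum>i<k. a i * G i c) else 0)}"

definition info_set :: "nat \<Rightarrow> (nat \<Rightarrow> nat \<Rightarrow> bit) \<Rightarrow> nat set \<Rightarrow> bool" where
  "info_set k G S \<longleftrightarrow> finite S \<and> card S = k \<and>
     (\<forall>a::nat \<Rightarrow> bit. (\<forall>i<k. (\<Sum>c\<in>S. a c * G i c) = 0) \<longrightarrow> (\<forall>c\<in>S. a c = 0))"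

(* G (k x tk) generates a t-CIS [tk,k] code: the coordinate set {..<t*k} is
   partitioned into t pairwise disjoint information sets
   (this forces G to have rank k) *)
definition tCIS_gen :: "nat \<Rightarrow> nat \<Rightarrow> (nat \<Rightarrow> nat \<Rightarrow> bit) \<Rightarrow> bool" where
  "tCIS_gen t k G \<longleftrightarrow> (\<exists>P :: nat \<Rightarrow> nat set.
      (\<forall>j<t. info_set k G (P j)) \<and>
      (\<forall>j<t. \<forall>j'<t. j \<noteq> j' \<longrightarrow> P j \<inter> P j' = {}) \<and>
      (\<Union>j<t. P j) = {..<t*k})"

definition tCIS_code :: "nat \<Rightarrow> nat \<Rightarrow> (nat \<Rightarrow> bit) set \<Rightarrow> bool" where
  "tCIS_code t k C \<longleftrightarrow> (\<exists>G. C = rowspace k (t*k) G \<and> tCIS_gen t k G)"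

definition perm_code :: "nat \<Rightarrow> (nat \<Rightarrow> nat) \<Rightarrow> (nat \<Rightarrow> bit) set \<Rightarrow> (nat \<Rightarrow> bit) set" where
  "perm_code n \<sigma> C = (\<lambda>v c. if c < n then v (\<sigma> c) else 0) ` C"

definition mat_invertible :: "nat \<Rightarrow> (nat \<Rightarrow> nat \<Rightarrow> bit) \<Rightarrow> bool" where
  "mat_invertible m A \<longleftrightarrow> (\<exists>B. \<forall>i<m. \<forall>l<m.
      (\<Sum>p<m. A i p * B p l) = (if i = l then 1 else 0) \<and>
      (\<Sum>p<m. B i p * A p l) = (if i = l then 1 else 0))"

(* the m x tm matrix (A_1 ... A_t); A j is the (j+1)-th block *)
definition concat_blocks :: "nat \<Rightarrow> (nat \<Rightarrow> nat \<Rightarrow> nat \<Rightarrow> bit) \<Rightarrow> nat \<Rightarrow> nat \<Rightarrow> bit" where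
  "concat_blocks m A i c = A (c div m) i (c mod m)"

definition coeffs :: "nat \<Rightarrow> (nat \<Rightarrow> nat \<Rightarrow> bit) \<Rightarrow> (nat \<Rightarrow> bit) \<Rightarrow> nat \<Rightarrow> bit" where
  "coeffs m A x = (THE c. (\<forall>i. m \<le> i \<longrightarrow> c i = 0) \<and> (\<forall>l<m. x l = (\<Sum>i<m. c i * A i l)))"

(* A j = A_{j+1}, x j = x_{j+1} (x j l its (l+1)-th entry), y i j = y_{i+1,j+1}.
   Column j*(m+1) + p: p = 0 is the z/y column, p = l+1 the x/A column l. *)
definition build_up :: "nat \<Rightarrow> (nat \<Rightarrow> nat \<Rightarrow> nat \<Rightarrow> bit) \<Rightarrow> (nat \<Rightarrow> nat \<Rightarrow> bit)
     \<Rightarrow> (nat \<Rightarrow> nat \<Rightarrow> bit) \<Rightarrow> nat \<Rightarrow> nat \<Rightarrow> bit" where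
  "build_up m A x y r c =
     (let j = c div (m+1); p = c mod (m+1) in
      if r = 0 then
        (if p = 0 then 1 + (\<Sum>i<m. coeffs m (A j) (x j) i * y i j) else x j (p - 1))
      else
        (if p = 0 then y (r - 1) j else A j (r - 1) (p - 1)))"

end

(*
  Write G for a generator matrix of C whose coordinates split into t information sets,
  each of size k = m + 1. Expanding the nonsingular k x k block of an information set
  along its first row yields a column whose deletion leaves an invertible m x m minor
  in rows 2..k; ordering each information set with that column first and permuting
  coordinates block by block turns G into a matrix of the building-up shape, the blocks
  A_j being these minors. The only entry not read off directly is the corner z_j: if it
  differed from 1 + sum_i c_ij y_ij, the row vector (1, c_1j, ..., c_mj) would annihilate
  the nonsingular j-th block.
*)
theory Submission
  imports Defs "Jordan_Normal_Form.Determinant"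
begin

(* Otherwise the simplifier turns sums and products of bits into xor/and and
   cardinalities, destroying the ring structure. *)
declare add_bit_eq_xor[simp del] mult_bit_eq_and[simp del]

definition sq_mat :: "nat \<Rightarrow> (nat \<Rightarrow> nat \<Rightarrow> 'a) \<Rightarrow> 'a mat" where
  "sq_mat n f = mat n n (\<lambda>(i, j). f i j)"

lemma sq_mat_carrier [simp]: "sq_mat n f \<in> carrier_mat n n"
  and dim_row_sq_mat [simp]: "dim_row (sq_mat n f) = n"
  and dim_col_sq_mat [simp]: "dim_col (sq_mat n f) = n"
  by (simp_all add: sq_mat_def)

lemma sq_mat_cong:
  "(\<And>i j. i < n \<Longrightarrow> j < n \<Longrightarrow> f i j = g i j) \<Longrightarrow> sq_mat n f = sq_mat n g"
  unfolding sq_mat_def by (rule eq_matI) auto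

lemma transpose_sq_mat: "transpose_mat (sq_mat n f) = sq_mat n (\<lambda>i j. f j i)"
  unfolding sq_mat_def by (rule eq_matI) auto

lemma sq_mat_mult_vec_nth:
  "i < n \<Longrightarrow> (sq_mat n f *\<^sub>v vec n v) $ i = (\<Sum>j<n. f i j * v j)"
  by (auto simp: sq_mat_def scalar_prod_def atLeast0LessThan intro: sum.cong)

lemma det_sq_mat_nonzero_iff:
  fixes f :: "nat \<Rightarrow> nat \<Rightarrow> 'a::field"
  shows "det (sq_mat n f) \<noteq> 0 \<longleftrightarrow>
    (\<forall>v. (\<forall>i<n. (\<Sum>j<n. f i j * v j) = 0) \<longrightarrow> (\<forall>j<n. v j = 0))"
proof -
  have kernel: "sq_mat n f *\<^sub>v vec n v = 0\<^sub>v n \<longleftrightarrow> (\<forall>i<n. (\<Sum>j<n. f i j * v j) = 0)" for v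
    by (auto simp: vec_eq_iff sq_mat_mult_vec_nth simp del: index_mult_mat_vec)
  have nonzero: "vec n v \<noteq> 0\<^sub>v n \<longleftrightarrow> (\<exists>j<n. v j \<noteq> 0)" for v
    by (auto simp: vec_eq_iff)
  have "det (sq_mat n f) = 0 \<longleftrightarrow> (\<exists>v. vec n v \<noteq> 0\<^sub>v n \<and> sq_mat n f *\<^sub>v vec n v = 0\<^sub>v n)"
    unfolding det_0_iff_vec_prod_zero_field[OF sq_mat_carrier]
    by (metis carrier_vecD vec_carrier vec_eq_iff index_vec eq_vecI)
  then show ?thesis
    unfolding kernel nonzero by blast
qed

lemma det_sq_mat_nonzero_rows_indep:
  fixes f :: "nat \<Rightarrow> nat \<Rightarrow> 'a::field"
  assumes "det (sq_mat n f) \<noteq> 0" "\<forall>j<n. (\<Sum>i<n. w i * f i j) = 0"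
  shows "\<forall>i<n. w i = 0"
proof -
  have "det (sq_mat n (\<lambda>i j. f j i)) \<noteq> 0"
    using assms(1) by (metis det_transpose sq_mat_carrier transpose_sq_mat)
  moreover have "\<forall>j<n. (\<Sum>i<n. f i j * w i) = 0"
    using assms(2) by (simp add: mult.commute)
  ultimately show ?thesis
    unfolding det_sq_mat_nonzero_iff by blast
qed

lemma det_sq_mat_nonzero_imp_mat_invertible:
  assumes "det (sq_mat n f) \<noteq> 0"
  shows "mat_invertible n f"
proof -
  obtain B where B: "B \<in> carrier_mat n n" "B * sq_mat n f = 1\<^sub>m n" "sq_mat n f * B = 1\<^sub>m n"
    using det_non_zero_imp_unit[OF sq_mat_carrier assms, of "()"]
    unfolding Units_def ring_mat_def by auto
  have entry: "(M * N) $$ (i, l) = (\<Sum>p<n. M $$ (i, p) * N $$ (p, l))"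
    if "M \<in> carrier_mat n n" "N \<in> carrier_mat n n" "i < n" "l < n" for M N :: "bit mat" and i l
    using that by (auto simp: scalar_prod_def atLeast0LessThan intro: sum.cong)
  show ?thesis
    unfolding mat_invertible_def
  proof (intro exI[of _ "\<lambda>i j. B $$ (i, j)"] allI impI conjI)
    fix i l assume "i < n" "l < n"
    then show "(\<Sum>p<n. f i p * B $$ (p, l)) = (if i = l then 1 else 0)"
      "(\<Sum>p<n. B $$ (i, p) * f p l) = (if i = l then 1 else 0)"
      using B entry[of "sq_mat n f" B i l] entry[of B "sq_mat n f" i l]
      by (auto simp: sq_mat_def)
  qed
qed

lemma det_sq_mat_Suc_nonzero_imp_minor:
  fixes f :: "nat \<Rightarrow> nat \<Rightarrow> 'a::comm_ring_1"
  assumes "det (sq_mat (Suc m) f) \<noteq> 0"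
  obtains l where "l < Suc m" "det (sq_mat m (\<lambda>i j. f (Suc i) (insert_index l j))) \<noteq> 0"
proof -
  have minor: "mat_delete (sq_mat (Suc m) f) 0 l = sq_mat m (\<lambda>i j. f (Suc i) (insert_index l j))" for l
    unfolding mat_delete_def sq_mat_def insert_index_def by (rule eq_matI) auto
  have "det (sq_mat (Suc m) f) = (\<Sum>l<Suc m. sq_mat (Suc m) f $$ (0, l) * cofactor (sq_mat (Suc m) f) 0 l)"
    by (rule laplace_expansion_row) auto
  with assms have "\<exists>l<Suc m. det (mat_delete (sq_mat (Suc m) f) 0 l) \<noteq> 0"
    by (metis (no_types, lifting) cofactor_def mult_zero_right sum.neutral lessThan_iff)
  then show thesis
    using that unfolding minor by blast
qed

lemma info_set_iff_det:
  assumes e: "bij_betw e {..<n} S"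
  shows "info_set n G S \<longleftrightarrow> det (sq_mat n (\<lambda>r q. G r (e q))) \<noteq> 0"
proof -
  have fin: "finite S" "card S = n"
    using e bij_betw_finite bij_betw_same_card by fastforce+
  have col_sum: "(\<Sum>c\<in>S. a c * G i c) = (\<Sum>q<n. G i (e q) * a (e q))" for a i
    using sum.reindex_bij_betw[OF e, of "\<lambda>c. a c * G i c"] by (simp add: mult.commute)
  have zero_on_S: "(\<forall>c\<in>S. a c = 0) \<longleftrightarrow> (\<forall>q<n. a (e q) = 0)" for a :: "nat \<Rightarrow> bit"
    using e by (auto simp: bij_betw_def)
  have inv_e: "inv_into {..<n} e (e q) = q" if "q < n" for q
    using e that by (simp add: bij_betw_def)
  show ?thesis
    unfolding info_set_def det_sq_mat_nonzero_iff
  proof (rule iffI; intro allI impI conjI)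
    fix v q assume indep: "finite S \<and> card S = n \<and> (\<forall>a. (\<forall>i<n. (\<Sum>c\<in>S. a c * G i c) = 0) \<longrightarrow> (\<forall>c\<in>S. a c = 0))"
      and v: "\<forall>i<n. (\<Sum>q<n. G i (e q) * v q) = 0" and "q < n"
    have "\<forall>i<n. (\<Sum>c\<in>S. (v \<circ> inv_into {..<n} e) c * G i c) = 0"
      using v by (simp add: col_sum inv_e)
    with indep have "\<forall>c\<in>S. (v \<circ> inv_into {..<n} e) c = 0"
      by blast
    with \<open>q < n\<close> show "v q = 0"
      unfolding zero_on_S by (simp add: inv_e)
  next
    fix a assume indep: "\<forall>v. (\<forall>i<n. (\<Sum>q<n. G i (e q) * v q) = 0) \<longrightarrow> (\<forall>q<n. v q = 0)"
      and "\<forall>i<n. (\<Sum>c\<in>S. a c * G i c) = 0"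
    then have "\<forall>q<n. a (e q) = 0"
      using indep[rule_format, of "\<lambda>q. a (e q)"] by (simp add: col_sum)
    then show "\<forall>c\<in>S. a c = 0"
      unfolding zero_on_S .
  qed (simp_all add: fin)
qed

lemma sum_lincomb_mult_right_inverse:
  fixes M N :: "nat \<Rightarrow> nat \<Rightarrow> 'a::comm_semiring_1"
  assumes "\<forall>l<m. \<forall>q<m. (\<Sum>p<m. M l p * N p q) = (if l = q then 1 else 0)" "q < m"
  shows "(\<Sum>p<m. (\<Sum>l<m. v l * M l p) * N p q) = v q"
proof -
  have "(\<Sum>p<m. (\<Sum>l<m. v l * M l p) * N p q) = (\<Sum>p<m. \<Sum>l<m. v l * M l p * N p q)"
    by (simp add: sum_distrib_right)
  also have "\<dots> = (\<Sum>l<m. \<Sum>p<m. v l * M l p * N p q)"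
    by (rule sum.swap)
  also have "\<dots> = (\<Sum>l<m. v l * (\<Sum>p<m. M l p * N p q))"
    by (simp add: sum_distrib_left mult.assoc)
  also have "\<dots> = (\<Sum>l<m. if l = q then v l else 0)"
    using assms by (intro sum.cong) auto
  also have "\<dots> = v q"
    using assms(2) by simp
  finally show ?thesis .
qed

lemma coeffs_lincomb:
  assumes "mat_invertible m A"
  shows "\<forall>l<m. x l = (\<Sum>i<m. Defs.coeffs m A x i * A i l)"
proof -
  obtain B where AB: "\<forall>i<m. \<forall>l<m. (\<Sum>p<m. A i p * B p l) = (if i = l then 1 else 0)"
    and BA: "\<forall>i<m. \<forall>l<m. (\<Sum>p<m. B i p * A p l) = (if i = l then 1 else 0)"
    using assms unfolding mat_invertible_def by blast
  define c where "c i = (if i < m then (\<Sum>l<m. x l * B l i) else 0)" for i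
  let ?is_coeffs = "\<lambda>c. (\<forall>i. m \<le> i \<longrightarrow> c i = 0) \<and> (\<forall>l<m. x l = (\<Sum>i<m. c i * A i l))"
  have "?is_coeffs c"
    using sum_lincomb_mult_right_inverse[OF BA] by (simp add: c_def)
  moreover have "c' = c" if "?is_coeffs c'" for c'
  proof
    fix i show "c' i = c i"
      using that sum_lincomb_mult_right_inverse[OF AB, of i c'] by (auto simp: c_def not_less)
  qed
  ultimately have "Defs.coeffs m A x = c"
    unfolding Defs.coeffs_def by (rule the_equality)
  with \<open>?is_coeffs c\<close> show ?thesis
    by simp
qed

lemma bit_add_self: "(a::bit) + a = 0"
  by (cases a) simp_all

lemma corner_eq_one_plus_coeffs:
  fixes m :: nat and f :: "nat \<Rightarrow> nat \<Rightarrow> bit"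
  defines "c \<equiv> Defs.coeffs m (\<lambda>i l. f (Suc i) (Suc l)) (\<lambda>l. f 0 (Suc l))"
  assumes "det (sq_mat (Suc m) f) \<noteq> 0" and "mat_invertible m (\<lambda>i l. f (Suc i) (Suc l))"
  shows "f 0 0 = 1 + (\<Sum>i<m. c i * f (Suc i) 0)"
proof -
  define w where "w r = (case r of 0 \<Rightarrow> 1 | Suc i \<Rightarrow> c i)" for r
  have col_sum: "(\<Sum>r<Suc m. w r * f r q) = f 0 q + (\<Sum>i<m. c i * f (Suc i) q)" for q
    unfolding sum.lessThan_Suc_shift by (simp add: w_def)
  have "\<forall>l<m. f 0 (Suc l) = (\<Sum>i<m. c i * f (Suc i) (Suc l))"
    using coeffs_lincomb[OF assms(3), of "\<lambda>l. f 0 (Suc l)"] unfolding c_def by simp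
  then have zero_col_Suc: "(\<Sum>r<Suc m. w r * f r (Suc l)) = 0" if "l < m" for l
    using that unfolding col_sum by (simp add: bit_add_self)
  have "f 0 0 + (\<Sum>i<m. c i * f (Suc i) 0) \<noteq> 0"
  proof
    assume "f 0 0 + (\<Sum>i<m. c i * f (Suc i) 0) = 0"
    then have "\<forall>q<Suc m. (\<Sum>r<Suc m. w r * f r q) = 0"
      using zero_col_Suc unfolding col_sum[of 0, symmetric] by (metis less_Suc_eq_0_disj)
    then have "w 0 = 0"
      using det_sq_mat_nonzero_rows_indep[OF assms(2)] by blast
    then show False
      by (simp add: w_def)
  qed
  then show ?thesis
    by (cases "f 0 0"; cases "\<Sum>i<m. c i * f (Suc i) 0") simp_all
qed

lemma info_set_enumeration_with_nonsingular_minor: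
  assumes "info_set (Suc m) G S"
  obtains e where "bij_betw e {..<Suc m} S" "det (sq_mat m (\<lambda>i q. G (Suc i) (e (Suc q)))) \<noteq> 0"
proof -
  obtain f where f: "bij_betw f {..<Suc m} S"
    using assms ex_bij_betw_nat_finite[of S] by (auto simp: info_set_def atLeast0LessThan)
  then have "det (sq_mat (Suc m) (\<lambda>r q. G r (f q))) \<noteq> 0"
    using assms info_set_iff_det by blast
  then obtain l where "l < Suc m" and minor: "det (sq_mat m (\<lambda>i q. G (Suc i) (f (insert_index l q)))) \<noteq> 0"
    by (rule det_sq_mat_Suc_nonzero_imp_minor)
  define \<tau> where "\<tau> q = (case q of 0 \<Rightarrow> l | Suc q' \<Rightarrow> insert_index l q')" for q
  have "\<tau> ` {..<Suc m} = insert l (insert_index l ` {0..<m})"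
    by (simp add: lessThan_Suc_eq_insert_0 image_image \<tau>_def atLeast0LessThan)
  also have "\<dots> = {..<Suc m}"
    using \<open>l < Suc m\<close> by (auto simp: insert_index_image)
  finally have "bij_betw \<tau> {..<Suc m} {..<Suc m}"
    by (simp add: bij_betw_def eq_card_imp_inj_on)
  then have "bij_betw (f \<circ> \<tau>) {..<Suc m} S"
    using f by (rule bij_betw_trans)
  moreover have "(\<lambda>i q. G (Suc i) ((f \<circ> \<tau>) (Suc q))) = (\<lambda>i q. G (Suc i) (f (insert_index l q)))"
    by (simp add: \<tau>_def)
  ultimately show thesis
    using that minor by metis
qed

lemma block_index_less:
  assumes "j < t" "q < k"
  shows "j * k + q < t * (k::nat)"
proof -
  have "j * k + q < Suc j * k"
    using assms(2) by simp
  also have "\<dots> \<le> t * k"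
    using assms(1) by (intro mult_le_mono1) simp
  finally show ?thesis .
qed

lemma block_index_div_mod [simp]:
  "q < k \<Longrightarrow> (j * k + q) div k = j" "q < k \<Longrightarrow> (j * k + q) mod k = (q::nat)"
  by simp_all

lemma tCIS_gen_if_blocks_nonsingular:
  assumes "\<forall>j<t. det (sq_mat n (\<lambda>r q. H r (j * n + q))) \<noteq> 0"
  shows "tCIS_gen t n H"
  unfolding tCIS_gen_def
proof (intro exI[of _ "\<lambda>j. (\<lambda>q. j * n + q) ` {..<n}"] conjI allI impI)
  fix j assume "j < t"
  then show "info_set n H ((\<lambda>q. j * n + q) ` {..<n})"
    using assms info_set_iff_det[of "\<lambda>q. j * n + q"] by (simp add: bij_betw_def inj_on_def)
next
  fix j j' :: nat assume "j \<noteq> j'"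
  then show "(\<lambda>q. j * n + q) ` {..<n} \<inter> (\<lambda>q. j' * n + q) ` {..<n} = {}"
    by (auto dest: arg_cong[of _ _ "\<lambda>c. c div n"])
next
  show "(\<Union>j<t. (\<lambda>q. j * n + q) ` {..<n}) = {..<t * n}"
  proof (intro equalityI subsetI)
    fix c assume "c \<in> {..<t * n}"
    then have "0 < n"
      by (cases "n = 0") auto
    with \<open>c \<in> {..<t * n}\<close> have "c div n < t" "c mod n < n" "c = c div n * n + c mod n"
      by (auto simp: less_mult_imp_div_less)
    then show "c \<in> (\<Union>j<t. (\<lambda>q. j * n + q) ` {..<n})"
      by blast
  qed (auto simp: block_index_less)
qed

lemma block_enumeration_permutes:
  fixes t k :: nat and E :: "nat \<Rightarrow> nat \<Rightarrow> nat"
  assumes "(\<Union>j<t. E j ` {..<k}) = {..<t * k}"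
  shows "(\<lambda>c. if c < t * k then E (c div k) (c mod k) else c) permutes {..<t * k}"
    (is "?\<sigma> permutes _")
proof (rule bij_imp_permutes)
  have "?\<sigma> ` {..<t * k} = (\<Union>j<t. E j ` {..<k})"
  proof (intro equalityI subsetI)
    fix c' assume "c' \<in> ?\<sigma> ` {..<t * k}"
    then obtain c where "c < t * k" "c' = E (c div k) (c mod k)"
      by auto
    moreover from \<open>c < t * k\<close> have "0 < k"
      by (cases "k = 0") auto
    ultimately show "c' \<in> (\<Union>j<t. E j ` {..<k})"
      by (intro UN_I[of "c div k"] image_eqI[of _ _ "c mod k"]) (auto simp: less_mult_imp_div_less)
  next
    fix c' assume "c' \<in> (\<Union>j<t. E j ` {..<k})"
    then obtain j q where "j < t" "q < k" "c' = E j q"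
      by auto
    then have "c' = ?\<sigma> (j * k + q)" "j * k + q < t * k"
      using block_index_less by auto
    then show "c' \<in> ?\<sigma> ` {..<t * k}"
      by blast
  qed
  with assms show "bij_betw ?\<sigma> {..<t * k} {..<t * k}"
    by (simp add: bij_betw_def eq_card_imp_inj_on)
qed simp

lemma rowspace_eq_range:
  "rowspace k n G = range (\<lambda>a c. if c < n then \<Sum>i<k. a i * G i c else 0)"
  unfolding rowspace_def by (auto simp: fun_eq_iff)

lemma perm_code_rowspace:
  assumes "\<sigma> permutes {..<n}" "\<forall>r<k. \<forall>c<n. H r c = G r (\<sigma> c)"
  shows "perm_code n \<sigma> (rowspace k n G) = rowspace k n H"
  unfolding perm_code_def rowspace_eq_range image_image
  using assms permutes_in_image[OF assms(1)] by (intro image_cong refl) (auto simp: fun_eq_iff)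

lemma tCIS_gen_enumeration:
  assumes "tCIS_gen t (Suc m) G"
  obtains E where
    "(\<lambda>c. if c < t * Suc m then E (c div Suc m) (c mod Suc m) else c) permutes {..<t * Suc m}"
    "\<forall>j<t. det (sq_mat (Suc m) (\<lambda>r q. G r (E j q))) \<noteq> 0"
    "\<forall>j<t. det (sq_mat m (\<lambda>i q. G (Suc i) (E j (Suc q)))) \<noteq> 0"
proof -
  obtain P where P: "\<forall>j<t. info_set (Suc m) G (P j)" "(\<Union>j<t. P j) = {..<t * Suc m}"
    using assms unfolding tCIS_gen_def by blast
  have "\<forall>j\<in>{..<t}. \<exists>e. bij_betw e {..<Suc m} (P j) \<and>
      det (sq_mat m (\<lambda>i q. G (Suc i) (e (Suc q)))) \<noteq> 0"
    using info_set_enumeration_with_nonsingular_minor P(1) by (metis lessThan_iff)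
  then obtain E where
    E_bij: "\<forall>j<t. bij_betw (E j) {..<Suc m} (P j)" and
    E_minor: "\<forall>j<t. det (sq_mat m (\<lambda>i q. G (Suc i) (E j (Suc q)))) \<noteq> 0"
    by (metis bchoice lessThan_iff)
  have "E j ` {..<Suc m} = P j" if "j < t" for j
    using E_bij that bij_betw_imp_surj_on by blast
  then have "(\<Union>j<t. E j ` {..<Suc m}) = {..<t * Suc m}"
    unfolding P(2)[symmetric] by (intro SUP_cong) auto
  moreover have "det (sq_mat (Suc m) (\<lambda>r q. G r (E j q))) \<noteq> 0" if "j < t" for j
    using info_set_iff_det[OF E_bij[rule_format, OF that]] P(1) that by blast
  ultimately show thesis
    using E_minor by (intro that block_enumeration_permutes) auto
qed

lemma build_up_eq_enumerated_columns:
  fixes G :: "nat \<Rightarrow> nat \<Rightarrow> bit" and E :: "nat \<Rightarrow> nat \<Rightarrow> nat"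
  assumes full: "\<forall>j<t. det (sq_mat (Suc m) (\<lambda>r q. G r (E j q))) \<noteq> 0"
    and minor: "\<forall>j<t. det (sq_mat m (\<lambda>i q. G (Suc i) (E j (Suc q)))) \<noteq> 0"
    and "c < t * Suc m"
  shows "build_up m (\<lambda>j i l. G (Suc i) (E j (Suc l))) (\<lambda>j l. G 0 (E j (Suc l))) (\<lambda>i j. G (Suc i) (E j 0)) r c
    = G r (E (c div Suc m) (c mod Suc m))"
proof -
  define j where "j = c div Suc m"
  have "j < t"
    unfolding j_def using assms(3) by (rule less_mult_imp_div_less)
  then have "det (sq_mat (Suc m) (\<lambda>r q. G r (E j q))) \<noteq> 0"
    and "mat_invertible m (\<lambda>i q. G (Suc i) (E j (Suc q)))"
    using full minor det_sq_mat_nonzero_imp_mat_invertible by blast+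
  then have "G 0 (E j 0) = 1 + (\<Sum>i<m. Defs.coeffs m (\<lambda>i l. G (Suc i) (E j (Suc l)))
      (\<lambda>l. G 0 (E j (Suc l))) i * G (Suc i) (E j 0))"
    by (rule corner_eq_one_plus_coeffs[of m "\<lambda>r q. G r (E j q)"])
  then show ?thesis
    unfolding build_up_def Let_def Suc_eq_plus1[symmetric] j_def[symmetric]
    by (cases r; cases "c mod Suc m") simp_all
qed

lemma tCIS_gen_build_up_enumeration:
  fixes G :: "nat \<Rightarrow> nat \<Rightarrow> bit" and E :: "nat \<Rightarrow> nat \<Rightarrow> nat"
  assumes full: "\<forall>j<t. det (sq_mat (Suc m) (\<lambda>r q. G r (E j q))) \<noteq> 0"
    and minor: "\<forall>j<t. det (sq_mat m (\<lambda>i q. G (Suc i) (E j (Suc q)))) \<noteq> 0"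
  shows "tCIS_gen t (Suc m)
    (build_up m (\<lambda>j i l. G (Suc i) (E j (Suc l))) (\<lambda>j l. G 0 (E j (Suc l))) (\<lambda>i j. G (Suc i) (E j 0)))"
    (is "tCIS_gen t (Suc m) ?H")
proof (rule tCIS_gen_if_blocks_nonsingular, intro allI impI)
  fix j assume "j < t"
  then have "sq_mat (Suc m) (\<lambda>r q. ?H r (j * Suc m + q)) = sq_mat (Suc m) (\<lambda>r q. G r (E j q))"
    by (intro sq_mat_cong)
      (simp add: build_up_eq_enumerated_columns[OF full minor] block_index_less del: mult_Suc_right)
  then show "det (sq_mat (Suc m) (\<lambda>r q. ?H r (j * Suc m + q))) \<noteq> 0"
    using full \<open>j < t\<close> by metis
qed

lemma tCIS_gen_concat_blocks:
  assumes "\<forall>j<t. det (sq_mat m (A j)) \<noteq> 0"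
  shows "tCIS_gen t m (concat_blocks m A)"
proof (rule tCIS_gen_if_blocks_nonsingular, intro allI impI)
  fix j assume "j < t"
  have "sq_mat m (\<lambda>r q. concat_blocks m A r (j * m + q)) = sq_mat m (A j)"
    by (intro sq_mat_cong) (simp add: concat_blocks_def)
  then show "det (sq_mat m (\<lambda>r q. concat_blocks m A r (j * m + q))) \<noteq> 0"
    using assms \<open>j < t\<close> by metis
qed

theorem proposition6:
  fixes t k :: nat and C :: "(nat \<Rightarrow> bit) set"
  assumes "t \<ge> 2" and "k \<ge> 2" and "tCIS_code t k C"
  shows "\<exists>\<sigma> A x y.
           \<sigma> permutes {..<t*k} \<and>
           (\<forall>j<t. mat_invertible (k-1) (A j)) \<and>
           tCIS_gen t (k-1) (concat_blocks (k-1) A) \<and>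
           tCIS_gen t k (build_up (k-1) A x y) \<and>
           perm_code (t*k) \<sigma> C = rowspace k (t*k) (build_up (k-1) A x y)"
proof -
  obtain m where k: "k = Suc m"
    using assms(2) by (cases k) auto
  obtain G where C: "C = rowspace (Suc m) (t * Suc m) G" and G: "tCIS_gen t (Suc m) G"
    using assms(3) unfolding tCIS_code_def k by blast
  obtain E where
    \<sigma>: "(\<lambda>c. if c < t * Suc m then E (c div Suc m) (c mod Suc m) else c) permutes {..<t * Suc m}"
      (is "?\<sigma> permutes _") and
    full: "\<forall>j<t. det (sq_mat (Suc m) (\<lambda>r q. G r (E j q))) \<noteq> 0" and
    minor: "\<forall>j<t. det (sq_mat m (\<lambda>i q. G (Suc i) (E j (Suc q)))) \<noteq> 0"
    using G by (rule tCIS_gen_enumeration)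
  let ?A = "\<lambda>j i l. G (Suc i) (E j (Suc l))"
  let ?H = "build_up m ?A (\<lambda>j l. G 0 (E j (Suc l))) (\<lambda>i j. G (Suc i) (E j 0))"
  have "perm_code (t * Suc m) ?\<sigma> C = rowspace (Suc m) (t * Suc m) ?H"
    unfolding C using \<sigma>
    by (rule perm_code_rowspace) (simp add: build_up_eq_enumerated_columns[OF full minor] del: mult_Suc_right)
  moreover have "\<forall>j<t. mat_invertible m (?A j)"
    using minor det_sq_mat_nonzero_imp_mat_invertible by blast
  moreover have "tCIS_gen t m (concat_blocks m ?A)"
    using minor by (intro tCIS_gen_concat_blocks) simp
  ultimately show ?thesis
    using \<sigma> tCIS_gen_build_up_enumeration[OF full minor] unfolding k diff_Suc_1
    by (intro exI conjI) assumption+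
qed

end
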